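(* Let $\mathbf{C}$ be a locally small category all of whose morphisms are monomorphisms, and let $\mathfrak{G} = (G_A)_{A \in \mathrm{Ob}(\mathbf{C})}$ be a family of groups with $G_A \le \mathrm{Aut}_\mathbf{C}(A)$ for all $A$. Then for every $A \in \mathrm{Ob}(\mathbf{C})$, $$t_\mathbf{C}(A) = |G_A| \cdot t^\mathfrak{G}_\mathbf{C}(A),$$ where the equality is read in $\mathbb{N}_\infty$ (in particular, if $G_A$ is infinite then $t_\mathbf{C}(A) = \infty$).
   Context: $\mathrm{Aut}_\mathbf{C}(A)$ is the group of invertible morphisms $A \to A$. For $f, g \in \hom(A,B)$ write $f \sim_\mathfrak{G} g$ if $f = g \cdot \alpha$ for some $\alpha \in G_A$; let $\binom{B}{A}_\mathfrak{G} = \hom(A,B)/{\sim_\mathfrak{G}} = \{f \cdot G_A : f \in \hom(A,B)\}$, and for $w \in \hom(B,C)$ let $w \cdot \binom{B}{A}_\mathfrak{G} = \{(w\cdot f)/{\sim_\mathfrak{G}} : f \in \hom(A,B)\}$. For $k,t \in \mathbb{N}$, $C \overset{\mathfrak{G}}{\longrightarrow} (B)^A_{k,t}$ means: for every coloring $\chi : \binom{C}{A}_\mathfrak{G} \to k=\{0,\dots,k-1\}$ there is $w \in \hom(B,C)$ with $|\chi(w \cdot \binom{B}{A}_\mathfrak{G})| \le t$. The small $\mathfrak{G}$-Ramsey degree $t^\mathfrak{G}_\mathbf{C}(A)$ is the least positive integer $n$ such that for all $k \in \mathbb{N}$ and all $B \in \mathrm{Ob}(\mathbf{C})$ there is $C$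 with $C \overset{\mathfrak{G}}{\longrightarrow} (B)^A_{k,n}$, and $\infty$ if there is none. The small embedding Ramsey degree $t_\mathbf{C}(A)$ is $t^\mathfrak{G}_\mathbf{C}(A)$ for the family $G_A = \{\mathrm{id}_A\}$ (so classes are single morphisms). Convention: $\mathbb{N}_\infty = \{1,2,\dots,\infty\}$ with $\infty \cdot n = n \cdot \infty = \infty\cdot\infty = \infty$, and $|G_A|$ is taken to be $\infty$ when $G_A$ is infinite. *)

theory Defs
  imports Main "HOL-Library.Extended_Nat"
begin

text \<open>A (locally small) category presented by a set of objects Ob, hom-sets
  hom A B, composition cmp w f (meaning w after f, written w . f in the paper),
  and identities idm A.\<close>

definition category ::
  "'o set \<Rightarrow> ('o \<Rightarrow> 'o \<Rightarrow> 'm set) \<Rightarrow> ('m \<Rightarrow> 'm \<Rightarrow> 'm) \<Rightarrow> ('o \<Rightarrow> 'm) \<Rightarrow> bool" where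
  "category Ob hom cmp idm \<longleftrightarrow>
     (\<forall>A\<in>Ob. \<forall>B\<in>Ob. \<forall>A'\<in>Ob. \<forall>B'\<in>Ob. hom A B \<inter> hom A' B' \<noteq> {} \<longrightarrow> A = A' \<and> B = B') \<and>
     (\<forall>A\<in>Ob. idm A \<in> hom A A) \<and>
     (\<forall>A\<in>Ob. \<forall>B\<in>Ob. \<forall>C\<in>Ob. \<forall>f\<in>hom A B. \<forall>g\<in>hom B C. cmp g f \<in> hom A C) \<and>
     (\<forall>A\<in>Ob. \<forall>B\<in>Ob. \<forall>f\<in>hom A B. cmp (idm B) f = f \<and> cmp f (idm A) = f) \<and>
     (\<forall>A\<in>Ob. \<forall>B\<in>Ob. \<forall>C\<in>Ob. \<forall>D\<in>Ob. \<forall>f\<in>hom A B. \<forall>g\<in>hom B C. \<forall>h\<in>hom C D.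
        cmp h (cmp g f) = cmp (cmp h g) f)"

definition all_mono ::
  "'o set \<Rightarrow> ('o \<Rightarrow> 'o \<Rightarrow> 'm set) \<Rightarrow> ('m \<Rightarrow> 'm \<Rightarrow> 'm) \<Rightarrow> bool" where
  "all_mono Ob hom cmp \<longleftrightarrow>
     (\<forall>B\<in>Ob. \<forall>C\<in>Ob. \<forall>h\<in>hom B C. \<forall>A\<in>Ob. \<forall>f\<in>hom A B. \<forall>g\<in>hom A B.
        cmp h f = cmp h g \<longrightarrow> f = g)"

definition Aut ::
  "('o \<Rightarrow> 'o \<Rightarrow> 'm set) \<Rightarrow> ('m \<Rightarrow> 'm \<Rightarrow> 'm) \<Rightarrow> ('o \<Rightarrow> 'm) \<Rightarrow> 'o \<Rightarrow> 'm set" where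
  "Aut hom cmp idm A =
     {f \<in> hom A A. \<exists>g\<in>hom A A. cmp g f = idm A \<and> cmp f g = idm A}"

definition subgroup_Aut ::
  "('o \<Rightarrow> 'o \<Rightarrow> 'm set) \<Rightarrow> ('m \<Rightarrow> 'm \<Rightarrow> 'm) \<Rightarrow> ('o \<Rightarrow> 'm) \<Rightarrow> 'o \<Rightarrow> 'm set \<Rightarrow> bool" where
  "subgroup_Aut hom cmp idm A G \<longleftrightarrow>
     G \<subseteq> Aut hom cmp idm A \<and> idm A \<in> G \<and>
     (\<forall>f\<in>G. \<forall>g\<in>G. cmp f g \<in> G) \<and>
     (\<forall>f\<in>G. \<exists>g\<in>G. cmp g f = idm A \<and> cmp f g = idm A)"

definition gclass :: "('m \<Rightarrow> 'm \<Rightarrow> 'm) \<Rightarrow> ('o \<Rightarrow> 'm set) \<Rightarrow> 'o \<Rightarrow> 'm \<Rightarrow> 'm set" where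
  "gclass cmp G A f = (\<lambda>\<alpha>. cmp f \<alpha>) ` G A"

definition gbinom ::
  "('o \<Rightarrow> 'o \<Rightarrow> 'm set) \<Rightarrow> ('m \<Rightarrow> 'm \<Rightarrow> 'm) \<Rightarrow> ('o \<Rightarrow> 'm set) \<Rightarrow> 'o \<Rightarrow> 'o \<Rightarrow> 'm set set" where
  "gbinom hom cmp G B A = gclass cmp G A ` hom A B"

definition gbinom_comp ::
  "('o \<Rightarrow> 'o \<Rightarrow> 'm set) \<Rightarrow> ('m \<Rightarrow> 'm \<Rightarrow> 'm) \<Rightarrow> ('o \<Rightarrow> 'm set) \<Rightarrow> 'm \<Rightarrow> 'o \<Rightarrow> 'o \<Rightarrow> 'm set set" where
  "gbinom_comp hom cmp G w B A = (\<lambda>f. gclass cmp G A (cmp w f)) ` hom A B"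

definition garrow ::
  "('o \<Rightarrow> 'o \<Rightarrow> 'm set) \<Rightarrow> ('m \<Rightarrow> 'm \<Rightarrow> 'm) \<Rightarrow> ('o \<Rightarrow> 'm set) \<Rightarrow> 'o \<Rightarrow> 'o \<Rightarrow> 'o \<Rightarrow> nat \<Rightarrow> nat \<Rightarrow> bool" where
  "garrow hom cmp G C B A k t \<longleftrightarrow>
     (\<forall>\<chi> :: 'm set \<Rightarrow> nat. (\<forall>X\<in>gbinom hom cmp G C A. \<chi> X < k) \<longrightarrow>
        (\<exists>w\<in>hom B C. card (\<chi> ` gbinom_comp hom cmp G w B A) \<le> t))"

definition small_G_ramsey_degree ::
  "'o set \<Rightarrow> ('o \<Rightarrow> 'o \<Rightarrow> 'm set) \<Rightarrow> ('m \<Rightarrow> 'm \<Rightarrow> 'm) \<Rightarrow> ('o \<Rightarrow> 'm set) \<Rightarrow> 'o \<Rightarrow> enat" where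
  "small_G_ramsey_degree Ob hom cmp G A =
     (let P = (\<lambda>n::nat. 0 < n \<and> (\<forall>k::nat. \<forall>B\<in>Ob. \<exists>C\<in>Ob. garrow hom cmp G C B A k n))
      in if (\<exists>n. P n) then enat (LEAST n. P n) else \<infinity>)"

definition small_ramsey_degree ::
  "'o set \<Rightarrow> ('o \<Rightarrow> 'o \<Rightarrow> 'm set) \<Rightarrow> ('m \<Rightarrow> 'm \<Rightarrow> 'm) \<Rightarrow> ('o \<Rightarrow> 'm) \<Rightarrow> 'o \<Rightarrow> enat" where
  "small_ramsey_degree Ob hom cmp idm A =
     small_G_ramsey_degree Ob hom cmp (\<lambda>X. {idm X}) A"

definition ecard :: "'a set \<Rightarrow> enat" where
  "ecard S = (if finite S then enat (card S) else \<infinity>)"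

end

theory Submission
  imports Defs "HOL-Library.FuncSet"
begin

text \<open>
  Since all morphisms are monic, \<open>G A\<close> acts freely on \<open>hom A C\<close> from the right: each class
  \<open>f \<cdot> G A\<close> is a copy of \<open>G A\<close>, and once a representative of every class is chosen, a morphism
  is the same as a pair (class, element of \<open>G A\<close>). Moreover \<open>w \<cdot> hom A B\<close> is a union of
  whole classes. Hence a \<open>k\<close>-colouring of morphisms is a colouring of classes by the
  \<open>k ^ |G A|\<close> possible colour tuples, which shows \<open>t(A) \<le> |G A| \<cdot> t\<^sup>G(A)\<close>. Conversely,
  colouring a morphism by its coordinate in \<open>G A\<close> alone shows that \<open>t(A) < \<infinity>\<close> forces \<open>|G A| \<le> t(A)\<close>,
  and colouring it by the pair (colour of its class, coordinate) shows \<open>|G A| \<cdot> t\<^sup>G(A) \<le> t(A)\<close>.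
\<close>

definition small_G_ramsey_bound ::
  "'o set \<Rightarrow> ('o \<Rightarrow> 'o \<Rightarrow> 'm set) \<Rightarrow> ('m \<Rightarrow> 'm \<Rightarrow> 'm) \<Rightarrow> ('o \<Rightarrow> 'm set) \<Rightarrow> 'o \<Rightarrow> nat \<Rightarrow> bool" where
  "small_G_ramsey_bound Ob hom cmp G A n \<longleftrightarrow>
     0 < n \<and> (\<forall>k. \<forall>B\<in>Ob. \<exists>C\<in>Ob. garrow hom cmp G C B A k n)"

lemma small_G_ramsey_degree_Least:
  "small_G_ramsey_degree Ob hom cmp G A =
     (if \<exists>n. small_G_ramsey_bound Ob hom cmp G A n
      then enat (LEAST n. small_G_ramsey_bound Ob hom cmp G A n) else \<infinity>)"
  unfolding small_G_ramsey_degree_def small_G_ramsey_bound_def Let_def ..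

lemma small_G_ramsey_degree_neq_0: "small_G_ramsey_degree Ob hom cmp G A \<noteq> 0"
proof (cases "\<exists>n. small_G_ramsey_bound Ob hom cmp G A n")
  case True
  then have "small_G_ramsey_bound Ob hom cmp G A (LEAST n. small_G_ramsey_bound Ob hom cmp G A n)"
    by (rule LeastI_ex)
  then have "0 < (LEAST n. small_G_ramsey_bound Ob hom cmp G A n)"
    unfolding small_G_ramsey_bound_def by blast
  with True show ?thesis
    unfolding small_G_ramsey_degree_Least by (simp add: zero_enat_def)
qed (simp add: small_G_ramsey_degree_Least)

lemma enat_Least_eq_mult:
  fixes P Q :: "nat \<Rightarrow> bool"
  assumes g: "0 < g" and div: "\<And>n. Q n \<Longrightarrow> P (n div g)" and mult: "\<And>m. P m \<Longrightarrow> Q (g * m)"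
  shows "(if \<exists>n. Q n then enat (LEAST n. Q n) else \<infinity>)
       = enat g * (if \<exists>n. P n then enat (LEAST n. P n) else \<infinity>)"
proof (cases "\<exists>n. Q n")
  case True
  define t where "t = (LEAST n. Q n)"
  have "P (t div g)"
    unfolding t_def using div LeastI_ex[OF True] .
  then have ex_P: "\<exists>n. P n" ..
  define s where "s = (LEAST n. P n)"
  have "t \<le> g * s"
    unfolding t_def s_def using mult[OF LeastI_ex[OF ex_P]] by (rule Least_le)
  moreover have "s \<le> t div g"
    unfolding s_def using \<open>P (t div g)\<close> by (rule Least_le)
  then have "g * s \<le> t"
    by (meson le_trans mult_le_mono2 times_div_less_eq_dividend)
  ultimately have "t = g * s"
    by simp
  then show ?thesis
    using True ex_P by (simp add: t_def s_def)
next
  case False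
  then have "\<not> (\<exists>n. P n)"
    using mult by blast
  with False g show ?thesis
    by simp
qed

locale mono_category =
  fixes Ob :: "'o set" and hom :: "'o \<Rightarrow> 'o \<Rightarrow> 'm set"
    and cmp :: "'m \<Rightarrow> 'm \<Rightarrow> 'm" and idm :: "'o \<Rightarrow> 'm"
  assumes category: "category Ob hom cmp idm"
    and all_mono: "all_mono Ob hom cmp"
begin

lemma comp_closed:
  "\<lbrakk>X \<in> Ob; Y \<in> Ob; Z \<in> Ob; f \<in> hom X Y; g \<in> hom Y Z\<rbrakk> \<Longrightarrow> cmp g f \<in> hom X Z"
  using category unfolding category_def by blast

lemma comp_assoc:
  "\<lbrakk>X \<in> Ob; Y \<in> Ob; Z \<in> Ob; W \<in> Ob; f \<in> hom X Y; g \<in> hom Y Z; h \<in> hom Z W\<rbrakk>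
    \<Longrightarrow> cmp h (cmp g f) = cmp (cmp h g) f"
  using category unfolding category_def by blast

lemma comp_id_left: "\<lbrakk>X \<in> Ob; Y \<in> Ob; f \<in> hom X Y\<rbrakk> \<Longrightarrow> cmp (idm Y) f = f"
  using category unfolding category_def by blast

lemma comp_id_right: "\<lbrakk>X \<in> Ob; Y \<in> Ob; f \<in> hom X Y\<rbrakk> \<Longrightarrow> cmp f (idm X) = f"
  using category unfolding category_def by blast

lemma comp_cancel_left:
  "\<lbrakk>X \<in> Ob; Y \<in> Ob; Z \<in> Ob; h \<in> hom Y Z; f \<in> hom X Y; g \<in> hom X Y; cmp h f = cmp h g\<rbrakk>
    \<Longrightarrow> f = g"
  using all_mono unfolding all_mono_def by blast

lemma gclass_trivial:
  "\<lbrakk>A \<in> Ob; C \<in> Ob; f \<in> hom A C\<rbrakk> \<Longrightarrow> gclass cmp (\<lambda>X. {idm X}) A f = {f}"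
  unfolding gclass_def by (simp add: comp_id_right)

lemma garrow_trivial_iff:
  assumes A: "A \<in> Ob" and B: "B \<in> Ob" and C: "C \<in> Ob"
  shows "garrow hom cmp (\<lambda>X. {idm X}) C B A k t \<longleftrightarrow>
    (\<forall>c :: 'm \<Rightarrow> nat. (\<forall>f\<in>hom A C. c f < k) \<longrightarrow>
       (\<exists>w\<in>hom B C. card (c ` cmp w ` hom A B) \<le> t))"
proof -
  have classes: "gbinom hom cmp (\<lambda>X. {idm X}) C A = (\<lambda>f. {f}) ` hom A C"
    unfolding gbinom_def using gclass_trivial[OF A C] by simp
  have w_classes: "gbinom_comp hom cmp (\<lambda>X. {idm X}) w B A = (\<lambda>f. {f}) ` cmp w ` hom A B"
    if "w \<in> hom B C" for w
    unfolding gbinom_comp_def image_image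
    using gclass_trivial[OF A C] comp_closed[OF A B C _ that] by simp
  show ?thesis
  proof (intro iffI allI impI)
    fix c :: "'m \<Rightarrow> nat"
    assume arrow: "garrow hom cmp (\<lambda>X. {idm X}) C B A k t" and c: "\<forall>f\<in>hom A C. c f < k"
    have "\<forall>X\<in>gbinom hom cmp (\<lambda>X. {idm X}) C A. (c \<circ> the_elem) X < k"
      using c classes by simp
    then obtain w where "w \<in> hom B C"
      and "card ((c \<circ> the_elem) ` gbinom_comp hom cmp (\<lambda>X. {idm X}) w B A) \<le> t"
      using arrow unfolding garrow_def by blast
    then show "\<exists>w\<in>hom B C. card (c ` cmp w ` hom A B) \<le> t"
      using w_classes by (auto simp: image_image)
  next
    assume colour: "\<forall>c :: 'm \<Rightarrow> nat. (\<forall>f\<in>hom A C. c f < k) \<longrightarrow>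
       (\<exists>w\<in>hom B C. card (c ` cmp w ` hom A B) \<le> t)"
    show "garrow hom cmp (\<lambda>X. {idm X}) C B A k t"
      unfolding garrow_def
    proof (intro allI impI)
      fix \<chi> :: "'m set \<Rightarrow> nat"
      assume "\<forall>X\<in>gbinom hom cmp (\<lambda>X. {idm X}) C A. \<chi> X < k"
      then have "\<forall>f\<in>hom A C. \<chi> {f} < k" using classes by simp
      then obtain w where "w \<in> hom B C" and "card ((\<lambda>f. \<chi> {f}) ` cmp w ` hom A B) \<le> t"
        using colour[rule_format, of "\<lambda>f. \<chi> {f}"] by blast
      then show "\<exists>w\<in>hom B C. card (\<chi> ` gbinom_comp hom cmp (\<lambda>X. {idm X}) w B A) \<le> t"
        using w_classes by (auto simp: image_image)
    qed
  qed
qed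

end

locale mono_category_with_subgroup = mono_category +
  fixes G :: "'o \<Rightarrow> 'm set" and A :: 'o
  assumes A_in_Ob: "A \<in> Ob"
    and subgroup: "subgroup_Aut hom cmp idm A (G A)"
begin

lemma G_subset_hom: "G A \<subseteq> hom A A"
  using subgroup unfolding subgroup_Aut_def Aut_def by blast

lemma id_in_G: "idm A \<in> G A"
  using subgroup unfolding subgroup_Aut_def by blast

lemma card_G_pos: "finite (G A) \<Longrightarrow> 0 < card (G A)"
  using id_in_G card_gt_0_iff by blast

lemma G_mult_closed: "\<lbrakk>\<alpha> \<in> G A; \<beta> \<in> G A\<rbrakk> \<Longrightarrow> cmp \<alpha> \<beta> \<in> G A"
  using subgroup unfolding subgroup_Aut_def by blast

lemma G_mult_image:
  assumes \<alpha>: "\<alpha> \<in> G A"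
  shows "cmp \<alpha> ` G A = G A"
proof
  show "cmp \<alpha> ` G A \<subseteq> G A"
    using G_mult_closed \<alpha> by blast
next
  obtain \<gamma> where \<gamma>: "\<gamma> \<in> G A" "cmp \<alpha> \<gamma> = idm A"
    using subgroup \<alpha> unfolding subgroup_Aut_def by blast
  show "G A \<subseteq> cmp \<alpha> ` G A"
  proof
    fix \<beta> assume \<beta>: "\<beta> \<in> G A"
    have "cmp \<alpha> (cmp \<gamma> \<beta>) = cmp (cmp \<alpha> \<gamma>) \<beta>"
      using \<alpha> \<beta> \<gamma> G_subset_hom comp_assoc[OF A_in_Ob A_in_Ob A_in_Ob A_in_Ob, of \<beta> \<gamma> \<alpha>]
      by blast
    also have "\<dots> = \<beta>"
      using \<gamma> \<beta> G_subset_hom comp_id_left[OF A_in_Ob A_in_Ob] by auto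
    finally show "\<beta> \<in> cmp \<alpha> ` G A"
      using G_mult_closed \<beta> \<gamma> by force
  qed
qed

lemma gclass_mult:
  assumes C: "C \<in> Ob" and f: "f \<in> hom A C" and \<alpha>: "\<alpha> \<in> G A"
  shows "gclass cmp G A (cmp f \<alpha>) = gclass cmp G A f"
proof -
  have "cmp (cmp f \<alpha>) \<beta> = cmp f (cmp \<alpha> \<beta>)" if "\<beta> \<in> G A" for \<beta>
    using that \<alpha> f G_subset_hom comp_assoc[OF A_in_Ob A_in_Ob A_in_Ob C, of \<beta> \<alpha> f]
    by (metis subsetD)
  then have "gclass cmp G A (cmp f \<alpha>) = cmp f ` cmp \<alpha> ` G A"
    unfolding gclass_def image_image by (rule image_cong[OF refl])
  then show ?thesis
    unfolding gclass_def G_mult_image[OF \<alpha>] .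
qed

lemma mem_gclass_self: "\<lbrakk>C \<in> Ob; f \<in> hom A C\<rbrakk> \<Longrightarrow> f \<in> gclass cmp G A f"
  unfolding gclass_def using id_in_G comp_id_right[OF A_in_Ob] by force

lemma gclass_eq_if_mem:
  assumes C: "C \<in> Ob" and X: "X \<in> gbinom hom cmp G C A" and f: "f \<in> X"
  shows "gclass cmp G A f = X"
proof -
  obtain h where h: "h \<in> hom A C" "X = gclass cmp G A h"
    using X unfolding gbinom_def by blast
  moreover obtain \<alpha> where "\<alpha> \<in> G A" "f = cmp h \<alpha>"
    using f h(2) unfolding gclass_def by blast
  ultimately show ?thesis
    using gclass_mult[OF C] by simp
qed

lemma bij_betw_gclass:
  assumes C: "C \<in> Ob" and h: "h \<in> hom A C"
  shows "bij_betw (cmp h) (G A) (gclass cmp G A h)"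
  unfolding bij_betw_def gclass_def
  using comp_cancel_left[OF A_in_Ob A_in_Ob C h] G_subset_hom by (auto intro: inj_onI)

lemma comp_image_eq_Union_gclasses:
  assumes B: "B \<in> Ob" and C: "C \<in> Ob" and w: "w \<in> hom B C"
  shows "cmp w ` hom A B = \<Union> (gbinom_comp hom cmp G w B A)"
proof
  show "cmp w ` hom A B \<subseteq> \<Union> (gbinom_comp hom cmp G w B A)"
    unfolding gbinom_comp_def
    using mem_gclass_self[OF C] comp_closed[OF A_in_Ob B C _ w] by blast
next
  have "gclass cmp G A (cmp w f) \<subseteq> cmp w ` hom A B" if f: "f \<in> hom A B" for f
  proof -
    have "gclass cmp G A (cmp w f) = (\<lambda>\<alpha>. cmp w (cmp f \<alpha>)) ` G A"
      unfolding gclass_def using f w G_subset_hom comp_assoc[OF A_in_Ob A_in_Ob B C]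
      by (intro image_cong) auto
    then show ?thesis
      using f G_subset_hom comp_closed[OF A_in_Ob A_in_Ob B] by blast
  qed
  then show "\<Union> (gbinom_comp hom cmp G w B A) \<subseteq> cmp w ` hom A B"
    unfolding gbinom_comp_def by blast
qed

lemma gbinom_comp_subset_gbinom:
  "\<lbrakk>B \<in> Ob; C \<in> Ob; w \<in> hom B C\<rbrakk> \<Longrightarrow> gbinom_comp hom cmp G w B A \<subseteq> gbinom hom cmp G C A"
  unfolding gbinom_comp_def gbinom_def using comp_closed[OF A_in_Ob] by blast

definition rep :: "'o \<Rightarrow> 'm set \<Rightarrow> 'm" where
  "rep C X = (SOME h. h \<in> hom A C \<and> gclass cmp G A h = X)"

lemma
  assumes "X \<in> gbinom hom cmp G C A"
  shows rep_in_hom: "rep C X \<in> hom A C" and gclass_rep: "gclass cmp G A (rep C X) = X"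
proof -
  have "\<exists>h. h \<in> hom A C \<and> gclass cmp G A h = X"
    using assms unfolding gbinom_def by blast
  then have "rep C X \<in> hom A C \<and> gclass cmp G A (rep C X) = X"
    unfolding rep_def by (rule someI_ex)
  then show "rep C X \<in> hom A C" "gclass cmp G A (rep C X) = X" by auto
qed

text \<open>Every \<open>f \<in> hom A C\<close> factors uniquely as \<open>rep C X \<cdot> \<alpha>\<close> with \<open>X\<close> its class and
  \<open>\<alpha> \<in> G A\<close>; \<open>coord C f\<close> is this \<open>\<alpha>\<close>.\<close>

definition coord :: "'o \<Rightarrow> 'm \<Rightarrow> 'm" where
  "coord C f = the_inv_into (G A) (cmp (rep C (gclass cmp G A f))) f"

lemma bij_betw_coord:
  assumes C: "C \<in> Ob" and X: "X \<in> gbinom hom cmp G C A"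
  shows "bij_betw (coord C) X (G A)"
proof -
  have bij: "bij_betw (cmp (rep C X)) (G A) X"
    using bij_betw_gclass[OF C rep_in_hom[OF X]] gclass_rep[OF X] by simp
  have "coord C f = the_inv_into (G A) (cmp (rep C X)) f" if "f \<in> X" for f
    using gclass_eq_if_mem[OF C X that] unfolding coord_def by simp
  then show ?thesis
    using bij_betw_the_inv_into[OF bij] by (simp cong: bij_betw_cong)
qed

lemma embedding_arrow_of_class_arrow:
  assumes fin: "finite (G A)" and B: "B \<in> Ob" and C: "C \<in> Ob"
    and arrow: "garrow hom cmp G C B A (k ^ card (G A)) m"
  shows "garrow hom cmp (\<lambda>X. {idm X}) C B A k (card (G A) * m)"
  unfolding garrow_trivial_iff[OF A_in_Ob B C]
proof (intro allI impI)
  fix c :: "'m \<Rightarrow> nat"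
  assume c: "\<forall>f\<in>hom A C. c f < k"
  define S where "S = G A \<rightarrow>\<^sub>E {..<k}"
  have "finite S" "card S = k ^ card (G A)"
    unfolding S_def using fin by (simp_all add: finite_PiE card_funcsetE)
  then obtain e where e: "bij_betw e S {..<k ^ card (G A)}"
    using ex_bij_betw_finite_nat atLeast0LessThan by metis
  define \<tau> where "\<tau> X = (\<lambda>\<alpha>\<in>G A. c (cmp (rep C X) \<alpha>))" for X
  have \<tau>_S: "\<tau> X \<in> S" if "X \<in> gbinom hom cmp G C A" for X
    unfolding S_def \<tau>_def
    using c G_subset_hom comp_closed[OF A_in_Ob A_in_Ob C _ rep_in_hom[OF that]] by auto
  have c_image: "c ` X = \<tau> X ` G A" if "X \<in> gbinom hom cmp G C A" for X
  proof -
    have X: "X = cmp (rep C X) ` G A"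
      using gclass_rep[OF that] unfolding gclass_def by simp
    have "c ` cmp (rep C X) ` G A = \<tau> X ` G A"
      unfolding \<tau>_def image_image by (rule image_cong) auto
    with X show ?thesis by metis
  qed
  have "\<forall>X\<in>gbinom hom cmp G C A. (e \<circ> \<tau>) X < k ^ card (G A)"
    using \<tau>_S bij_betw_apply[OF e] by auto
  then obtain w where w: "w \<in> hom B C"
    and card_w: "card ((e \<circ> \<tau>) ` gbinom_comp hom cmp G w B A) \<le> m"
    using arrow unfolding garrow_def by blast
  define Y where "Y = gbinom_comp hom cmp G w B A"
  have Y: "Y \<subseteq> gbinom hom cmp G C A"
    unfolding Y_def using gbinom_comp_subset_gbinom[OF B C w] .
  have \<tau>_Y: "\<tau> ` Y \<subseteq> S"
    using Y \<tau>_S by blast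
  then have fin_\<tau>_Y: "finite (\<tau> ` Y)"
    using \<open>finite S\<close> finite_subset by blast
  have "card (\<tau> ` Y) = card (e ` \<tau> ` Y)"
    using \<tau>_Y e by (metis bij_betw_def card_image inj_on_subset)
  with card_w have card_\<tau>: "card (\<tau> ` Y) \<le> m"
    unfolding Y_def by (simp add: image_comp)
  have "c ` cmp w ` hom A B = (\<Union>X\<in>Y. c ` X)"
    unfolding comp_image_eq_Union_gclasses[OF B C w] image_Union Y_def ..
  also have "\<dots> = (\<Union>X\<in>Y. \<tau> X ` G A)"
    by (intro SUP_cong refl) (simp add: c_image subsetD[OF Y])
  also have "\<dots> = (\<Union>T\<in>\<tau> ` Y. T ` G A)"
    by (simp add: image_image)
  also have "card \<dots> \<le> (\<Sum>T\<in>\<tau> ` Y. card (T ` G A))"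
    using card_UN_le[OF fin_\<tau>_Y] .
  also have "\<dots> \<le> card (\<tau> ` Y) * card (G A)"
    using sum_bounded_above[of "\<tau> ` Y" "\<lambda>T. card (T ` G A)" "card (G A)"]
    by (simp add: card_image_le fin)
  also have "\<dots> \<le> card (G A) * m"
    using card_\<tau> by simp
  finally show "\<exists>w\<in>hom B C. card (c ` cmp w ` hom A B) \<le> card (G A) * m"
    using w by blast
qed

lemma card_G_le_of_embedding_arrow:
  assumes C: "C \<in> Ob" and arrow: "garrow hom cmp (\<lambda>X. {idm X}) C A A (Suc n) n"
  shows "finite (G A) \<and> card (G A) \<le> n"
proof (rule ccontr)
  assume "\<not> (finite (G A) \<and> card (G A) \<le> n)"
  then obtain T where T: "T \<subseteq> G A" "card T = Suc n"
    by (metis infinite_arbitrarily_large not_less_eq_eq obtain_subset_with_card_n)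
  then obtain ix where ix: "bij_betw ix T {..<Suc n}"
    using ex_bij_betw_finite_nat atLeast0LessThan card.infinite by (metis nat.distinct(1))
  define c where "c f = (if coord C f \<in> T then ix (coord C f) else 0)" for f
  have c_less: "c f < Suc n" for f
    unfolding c_def using bij_betw_apply[OF ix] by auto
  then obtain w where w: "w \<in> hom A C" and card_w: "card (c ` cmp w ` hom A A) \<le> n"
    using arrow unfolding garrow_trivial_iff[OF A_in_Ob A_in_Ob C] by blast
  have "gclass cmp G A w \<in> gbinom_comp hom cmp G w A A"
    unfolding gbinom_comp_def using comp_id_right[OF A_in_Ob C w] id_in_G G_subset_hom by force
  then have class_w: "gclass cmp G A w \<subseteq> cmp w ` hom A A"
    using comp_image_eq_Union_gclasses[OF A_in_Ob C w] by blast
  have "gclass cmp G A w \<in> gbinom hom cmp G C A"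
    unfolding gbinom_def using w by blast
  then have coord_onto: "coord C ` gclass cmp G A w = G A"
    using bij_betw_coord[OF C] bij_betw_imp_surj_on by blast
  have "{..<Suc n} = ix ` T"
    using ix by (simp add: bij_betw_def)
  also have "\<dots> \<subseteq> c ` gclass cmp G A w"
  proof (rule image_subsetI)
    fix \<alpha> assume "\<alpha> \<in> T"
    then obtain f where f: "f \<in> gclass cmp G A w" "coord C f = \<alpha>"
      using T(1) coord_onto by (metis imageE subsetD)
    then have "ix \<alpha> = c f"
      using \<open>\<alpha> \<in> T\<close> by (simp add: c_def)
    with f(1) show "ix \<alpha> \<in> c ` gclass cmp G A w" by blast
  qed
  also have "\<dots> \<subseteq> c ` cmp w ` hom A A"
    using class_w by blast
  finally have "{..<Suc n} \<subseteq> c ` cmp w ` hom A A" .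
  moreover have "finite (c ` cmp w ` hom A A)"
    using c_less finite_subset[of "c ` cmp w ` hom A A" "{..<Suc n}"] by blast
  ultimately have "card {..<Suc n} \<le> card (c ` cmp w ` hom A A)"
    by (rule card_mono[rotated])
  with card_w show False
    by simp
qed

lemma class_arrow_of_embedding_arrow:
  assumes fin: "finite (G A)" and B: "B \<in> Ob" and C: "C \<in> Ob"
    and arrow: "garrow hom cmp (\<lambda>X. {idm X}) C B A (k * card (G A)) n"
  shows "garrow hom cmp G C B A k (n div card (G A))"
  unfolding garrow_def
proof (intro allI impI)
  fix \<chi> :: "'m set \<Rightarrow> nat"
  assume \<chi>: "\<forall>X\<in>gbinom hom cmp G C A. \<chi> X < k"
  let ?g = "card (G A)"
  obtain ix where ix: "bij_betw ix (G A) {..<?g}"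
    using ex_bij_betw_finite_nat[OF fin] atLeast0LessThan by metis
  let ?pair = "\<lambda>(a, i). a * ?g + i"
  define c where "c f = ?pair (\<chi> (gclass cmp G A f), ix (coord C f))" for f
  have c_less: "c f < k * ?g" if f: "f \<in> hom A C" for f
  proof -
    have class_f: "gclass cmp G A f \<in> gbinom hom cmp G C A"
      unfolding gbinom_def using f by blast
    have "coord C f \<in> G A"
      using bij_betw_apply[OF bij_betw_coord[OF C class_f]] mem_gclass_self[OF C f] .
    then have "ix (coord C f) < ?g"
      using bij_betw_apply[OF ix] by simp
    moreover have "\<chi> (gclass cmp G A f) < k"
      using \<chi> class_f by blast
    ultimately show ?thesis
      unfolding c_def
      by (simp, metis add_less_cancel_left less_le_trans mult_Suc mult_le_mono1 Suc_leI add.commute)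
  qed
  then obtain w where w: "w \<in> hom B C" and card_w: "card (c ` cmp w ` hom A B) \<le> n"
    using arrow[unfolded garrow_trivial_iff[OF A_in_Ob B C], rule_format, of c] by blast
  define Y where "Y = gbinom_comp hom cmp G w B A"
  have Y: "Y \<subseteq> gbinom hom cmp G C A"
    unfolding Y_def using gbinom_comp_subset_gbinom[OF B C w] .
  have c_image: "c ` X = ?pair ` ({\<chi> X} \<times> {..<?g})" if X: "X \<in> gbinom hom cmp G C A" for X
  proof -
    have "c ` X = (\<lambda>i. ?pair (\<chi> X, i)) ` ix ` coord C ` X"
      unfolding c_def image_image using gclass_eq_if_mem[OF C X] by simp
    also have "\<dots> = (\<lambda>i. ?pair (\<chi> X, i)) ` {..<?g}"
      using bij_betw_imp_surj_on[OF bij_betw_coord[OF C X]] bij_betw_imp_surj_on[OF ix] by simp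
    finally show ?thesis by auto
  qed
  have "c ` cmp w ` hom A B = (\<Union>X\<in>Y. c ` X)"
    unfolding comp_image_eq_Union_gclasses[OF B C w] image_Union Y_def ..
  also have "\<dots> = (\<Union>X\<in>Y. ?pair ` ({\<chi> X} \<times> {..<?g}))"
    by (intro SUP_cong refl) (simp add: c_image subsetD[OF Y])
  also have "\<dots> = ?pair ` (\<chi> ` Y \<times> {..<?g})"
    by auto
  finally have c_w: "c ` cmp w ` hom A B = ?pair ` (\<chi> ` Y \<times> {..<?g})" .
  have "inj_on ?pair (\<chi> ` Y \<times> {..<?g})"
    by (rule inj_onI, clarsimp)
      (metis add.commute div_mult_self3 div_less mod_mult_self3 mod_less less_zeroE add_0 neq0_conv)
  moreover have "finite (\<chi> ` Y)"
    using Y \<chi> finite_subset[of "\<chi> ` Y" "{..<k}"] by blast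
  ultimately have "card (c ` cmp w ` hom A B) = card (\<chi> ` Y) * ?g"
    unfolding c_w by (simp add: card_image card_cartesian_product)
  with card_w have "card (\<chi> ` Y) \<le> n div ?g"
    using card_G_pos[OF fin] by (simp add: less_eq_div_iff_mult_less_eq)
  with w show "\<exists>w\<in>hom B C. card (\<chi> ` gbinom_comp hom cmp G w B A) \<le> n div ?g"
    unfolding Y_def by blast
qed

lemma card_G_le_of_embedding_bound:
  "small_G_ramsey_bound Ob hom cmp (\<lambda>X. {idm X}) A n \<Longrightarrow> finite (G A) \<and> card (G A) \<le> n"
  unfolding small_G_ramsey_bound_def using A_in_Ob card_G_le_of_embedding_arrow by blast

lemma embedding_bound_of_class_bound:
  assumes "finite (G A)" and "small_G_ramsey_bound Ob hom cmp G A m"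
  shows "small_G_ramsey_bound Ob hom cmp (\<lambda>X. {idm X}) A (card (G A) * m)"
  using assms card_G_pos embedding_arrow_of_class_arrow unfolding small_G_ramsey_bound_def
  by (metis nat_0_less_mult_iff)

lemma class_bound_of_embedding_bound:
  assumes bound: "small_G_ramsey_bound Ob hom cmp (\<lambda>X. {idm X}) A n"
  shows "small_G_ramsey_bound Ob hom cmp G A (n div card (G A))"
proof -
  have "finite (G A)" "card (G A) \<le> n"
    using card_G_le_of_embedding_bound[OF bound] by auto
  then show ?thesis
    using bound card_G_pos class_arrow_of_embedding_arrow unfolding small_G_ramsey_bound_def
    by (metis div_greater_zero_iff)
qed

lemma small_ramsey_degree_eq_card_mult:
  assumes fin: "finite (G A)"
  shows "small_ramsey_degree Ob hom cmp idm A
           = enat (card (G A)) * small_G_ramsey_degree Ob hom cmp G A"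
  unfolding small_ramsey_degree_def small_G_ramsey_degree_Least
  using class_bound_of_embedding_bound embedding_bound_of_class_bound[OF fin]
  by (intro enat_Least_eq_mult card_G_pos[OF fin])

lemma small_ramsey_degree_infinite:
  assumes "infinite (G A)"
  shows "small_ramsey_degree Ob hom cmp idm A = \<infinity>"
proof -
  have "\<not> (\<exists>n. small_G_ramsey_bound Ob hom cmp (\<lambda>X. {idm X}) A n)"
    using assms card_G_le_of_embedding_bound by blast
  then show ?thesis
    unfolding small_ramsey_degree_def small_G_ramsey_degree_Least by simp
qed

end

theorem proposition3p3:
  fixes Ob :: "'o set" and hom :: "'o \<Rightarrow> 'o \<Rightarrow> 'm set"
    and cmp :: "'m \<Rightarrow> 'm \<Rightarrow> 'm" and idm :: "'o \<Rightarrow> 'm"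
    and G :: "'o \<Rightarrow> 'm set" and A :: 'o
  assumes "category Ob hom cmp idm"
    and "all_mono Ob hom cmp"
    and "\<forall>X\<in>Ob. subgroup_Aut hom cmp idm X (G X)"
    and "A \<in> Ob"
  shows "small_ramsey_degree Ob hom cmp idm A
           = ecard (G A) * small_G_ramsey_degree Ob hom cmp G A"
proof -
  interpret mono_category_with_subgroup Ob hom cmp idm G A
    using assms by unfold_locales auto
  show ?thesis
  proof (cases "finite (G A)")
    case True
    then show ?thesis
      unfolding ecard_def by (simp add: small_ramsey_degree_eq_card_mult)
  next
    case False
    have "\<infinity> * small_G_ramsey_degree Ob hom cmp G A = \<infinity>"
      using small_G_ramsey_degree_neq_0 by (simp add: imult_is_infinity)
    with False show ?thesis
      unfolding ecard_def by (simp add: small_ramsey_degree_infinite)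
  qed
qed

end
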